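(* Let $T>0$. Let $B_1,B_2,d_1,d_2$ be nonnegative functions of $(t,x)\in\mathbb{R}\times[0,\infty)$, $T$-periodic in $t$. Suppose that for $k=1,2$ there exist a real $\mu_k$ and a positive function $\phi^k$, $T$-periodic in $t$, such that $$-\partial_t\phi^k(t,x)-\partial_x\phi^k(t,x)+[d_k(t,x)+\mu_k]\phi^k(t,x)\geq B_k(t,x)\,\phi^k(t,0).$$ For $\theta\in[0,1]$ let $\phi^\theta=(\phi^1)^\theta(\phi^2)^{1-\theta}$, $B^\theta=B_1^\theta B_2^{1-\theta}$ and $d^\theta=\theta d_1+(1-\theta)d_2$. Then $\phi^\theta$ is positive, $T$-periodic in $t$, and $$-\partial_t\phi^\theta(t,x)-\partial_x\phi^\theta(t,x)+[\theta\mu_1+(1-\theta)\mu_2+d^\theta(t,x)]\phi^\theta(t,x)\geq B^\theta(t,x)\,\phi^\theta(t,0).$$ *)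

theory Defs
  imports "HOL-Analysis.Analysis"
begin

text \<open>Real power with the convention 0^0 = 1 (Isabelle's powr has 0 powr 0 = 0).\<close>
definition rpow :: "real \<Rightarrow> real \<Rightarrow> real" where
  "rpow a e = (if e = 0 then 1 else a powr e)"

definition has_partial_t :: "(real \<Rightarrow> real \<Rightarrow> real) \<Rightarrow> real \<Rightarrow> real \<Rightarrow> real \<Rightarrow> bool" where
  "has_partial_t f t x D \<longleftrightarrow> ((\<lambda>s. f s x) has_real_derivative D) (at t)"

definition has_partial_x :: "(real \<Rightarrow> real \<Rightarrow> real) \<Rightarrow> real \<Rightarrow> real \<Rightarrow> real \<Rightarrow> bool" where
  "has_partial_x f t x D \<longleftrightarrow> ((\<lambda>y. f t y) has_real_derivative D) (at x within {0..})"

end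

theory Submission
  imports Defs
begin

text \<open>On positive functions the operator \<open>-\<partial>\<^sub>t - \<partial>\<^sub>x\<close> is a derivation, so applied to
  \<open>\<phi>\<^sup>\<theta> = (\<phi>\<^sup>1)\<^sup>\<theta> (\<phi>\<^sup>2)\<^sup>1\<^sup>-\<^sup>\<theta>\<close> and divided by \<open>\<phi>\<^sup>\<theta>\<close> it gives the convex combination, with weights
  \<open>\<theta>, 1 - \<theta>\<close>, of the same operator applied to \<open>\<phi>\<^sup>k\<close> and divided by \<open>\<phi>\<^sup>k\<close>. The two hypotheses bound
  these quotients from below by \<open>B\<^sub>k \<phi>\<^sup>k(t,0) / \<phi>\<^sup>k\<close>, and the weighted AM-GM inequality turns the
  convex combination of these bounds into their geometric mean, which is \<open>B\<^sup>\<theta> \<phi>\<^sup>\<theta>(t,0) / \<phi>\<^sup>\<theta>\<close>.\<close>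

lemma rpow_eq_powr: "a > 0 \<Longrightarrow> rpow a e = a powr e"
  by (simp add: rpow_def)

lemma rpow_mult: "0 \<le> a \<Longrightarrow> 0 \<le> b \<Longrightarrow> rpow (a * b) e = rpow a e * rpow b e"
  by (simp add: rpow_def powr_mult)

lemma rpow_weighted_geometric_le_arithmetic:
  fixes u v w :: real
  assumes "0 \<le> u" "0 \<le> v" "0 \<le> w" "w \<le> 1"
  shows "rpow u w * rpow v (1 - w) \<le> w * u + (1 - w) * v"
proof (cases "w = 0 \<or> w = 1 \<or> u = 0 \<or> v = 0")
  case True
  then show ?thesis using assms by (auto simp: rpow_def)
next
  case False
  then show ?thesis
    using Youngs_inequality_0[of w "1 - w" u v] assms by (simp add: rpow_def)
qed

lemma has_real_derivative_rpow_geometric_mean: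
  fixes f g :: "real \<Rightarrow> real"
  assumes f: "(f has_real_derivative a) (at x within S)"
    and g: "(g has_real_derivative b) (at x within S)"
    and "x \<in> S" and pos: "\<And>y. y \<in> S \<Longrightarrow> f y > 0 \<and> g y > 0"
  shows "((\<lambda>y. rpow (f y) w * rpow (g y) (1 - w)) has_real_derivative
           (w * a / f x + (1 - w) * b / g x) * (rpow (f x) w * rpow (g x) (1 - w))) (at x within S)"
proof -
  have fx: "f x > 0" and gx: "g x > 0" using pos \<open>x \<in> S\<close> by auto
  have powr_pred: "f x powr (w - 1) = f x powr w / f x" "g x powr ((1 - w) - 1) = g x powr (1 - w) / g x"
    using powr_diff[of "f x" w 1] powr_diff[of "g x" "1 - w" 1] fx gx by simp_all
  have "((\<lambda>y. f y powr w * g y powr (1 - w)) has_real_derivative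
          f x powr w * ((1 - w) * g x powr ((1 - w) - 1) * b) + w * f x powr (w - 1) * a * g x powr (1 - w))
        (at x within S)"
    using DERIV_chain2[OF has_real_derivative_powr[OF fx] f]
      DERIV_chain2[OF has_real_derivative_powr[OF gx] g]
    by (rule DERIV_mult')
  moreover have "f x powr w * ((1 - w) * g x powr ((1 - w) - 1) * b) + w * f x powr (w - 1) * a * g x powr (1 - w)
      = (w * a / f x + (1 - w) * b / g x) * (rpow (f x) w * rpow (g x) (1 - w))"
    unfolding powr_pred using fx gx by (simp add: rpow_eq_powr field_simps)
  ultimately have "((\<lambda>y. f y powr w * g y powr (1 - w)) has_real_derivative
      (w * a / f x + (1 - w) * b / g x) * (rpow (f x) w * rpow (g x) (1 - w))) (at x within S)"
    by simp
  then show ?thesis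
    by (rule has_field_derivative_transform_within[where d = 1]) (use \<open>x \<in> S\<close> pos in \<open>auto simp: rpow_eq_powr\<close>)
qed

text \<open>The pointwise core of the argument: \<open>L\<^sub>k\<close> stands for \<open>(-\<partial>\<^sub>t - \<partial>\<^sub>x) \<phi>\<^sup>k\<close>, \<open>p\<^sub>k\<close> for \<open>\<phi>\<^sup>k(t,x)\<close>,
  \<open>q\<^sub>k\<close> for \<open>\<phi>\<^sup>k(t,0)\<close> and \<open>m\<^sub>k\<close> for \<open>d\<^sub>k(t,x) + \<mu>\<^sub>k\<close>.\<close>

lemma geometric_mean_supersolution_ineq:
  fixes \<theta> L1 L2 m1 m2 p1 p2 q1 q2 b1 b2 :: real
  assumes "0 \<le> \<theta>" "\<theta> \<le> 1" "p1 > 0" "p2 > 0" "q1 > 0" "q2 > 0" "b1 \<ge> 0" "b2 \<ge> 0"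
    and ineq1: "L1 + m1 * p1 \<ge> b1 * q1"
    and ineq2: "L2 + m2 * p2 \<ge> b2 * q2"
  defines "P \<equiv> rpow p1 \<theta> * rpow p2 (1 - \<theta>)"
  shows "(\<theta> * L1 / p1 + (1 - \<theta>) * L2 / p2) * P + (\<theta> * m1 + (1 - \<theta>) * m2) * P
           \<ge> rpow b1 \<theta> * rpow b2 (1 - \<theta>) * (rpow q1 \<theta> * rpow q2 (1 - \<theta>))"
proof -
  define u where "u = b1 * q1 / p1"
  define v where "v = b2 * q2 / p2"
  have uv: "u \<ge> 0" "v \<ge> 0" using assms by (auto simp: u_def v_def)
  have P: "P > 0" using assms by (simp add: P_def rpow_eq_powr)
  have "(L1 + m1 * p1) / p1 \<ge> u" "(L2 + m2 * p2) / p2 \<ge> v"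
    using ineq1 ineq2 assms by (simp_all add: u_def v_def divide_right_mono)
  have "(\<theta> * L1 / p1 + (1 - \<theta>) * L2 / p2) * P + (\<theta> * m1 + (1 - \<theta>) * m2) * P
      = P * (\<theta> * ((L1 + m1 * p1) / p1) + (1 - \<theta>) * ((L2 + m2 * p2) / p2))"
    using assms by (simp add: field_simps)
  also have "\<dots> \<ge> P * (\<theta> * u + (1 - \<theta>) * v)"
    using \<open>(L1 + m1 * p1) / p1 \<ge> u\<close> \<open>(L2 + m2 * p2) / p2 \<ge> v\<close> assms P
    by (intro mult_left_mono add_mono) auto
  also have "P * (\<theta> * u + (1 - \<theta>) * v) \<ge> P * (rpow u \<theta> * rpow v (1 - \<theta>))"
    using rpow_weighted_geometric_le_arithmetic[OF uv assms(1,2)] P by simp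
  also have "P * (rpow u \<theta> * rpow v (1 - \<theta>)) = rpow (u * p1) \<theta> * rpow (v * p2) (1 - \<theta>)"
    using uv assms by (simp add: P_def rpow_mult)
  also have "\<dots> = rpow b1 \<theta> * rpow b2 (1 - \<theta>) * (rpow q1 \<theta> * rpow q2 (1 - \<theta>))"
    using assms by (simp add: u_def v_def rpow_mult)
  finally show ?thesis .
qed

theorem lemma1p1:
  fixes T \<mu>1 \<mu>2 \<theta> :: real
    and B1 B2 d1 d2 \<phi>1 \<phi>2 :: "real \<Rightarrow> real \<Rightarrow> real"
  assumes T_pos: "T > 0"
    and nonneg: "\<And>t x. x \<ge> 0 \<Longrightarrow>
           B1 t x \<ge> 0 \<and> B2 t x \<ge> 0 \<and> d1 t x \<ge> 0 \<and> d2 t x \<ge> 0"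
    and per: "\<And>t x. x \<ge> 0 \<Longrightarrow>
           B1 (t + T) x = B1 t x \<and> B2 (t + T) x = B2 t x \<and>
           d1 (t + T) x = d1 t x \<and> d2 (t + T) x = d2 t x"
    and \<phi>_pos: "\<And>t x. x \<ge> 0 \<Longrightarrow> \<phi>1 t x > 0 \<and> \<phi>2 t x > 0"
    and \<phi>_per: "\<And>t x. x \<ge> 0 \<Longrightarrow> \<phi>1 (t + T) x = \<phi>1 t x \<and> \<phi>2 (t + T) x = \<phi>2 t x"
    and ineq1: "\<And>t x. x \<ge> 0 \<Longrightarrow> \<exists>Dt Dx. has_partial_t \<phi>1 t x Dt \<and> has_partial_x \<phi>1 t x Dx \<and>
           - Dt - Dx + (d1 t x + \<mu>1) * \<phi>1 t x \<ge> B1 t x * \<phi>1 t 0"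
    and ineq2: "\<And>t x. x \<ge> 0 \<Longrightarrow> \<exists>Dt Dx. has_partial_t \<phi>2 t x Dt \<and> has_partial_x \<phi>2 t x Dx \<and>
           - Dt - Dx + (d2 t x + \<mu>2) * \<phi>2 t x \<ge> B2 t x * \<phi>2 t 0"
    and \<theta>: "0 \<le> \<theta>" "\<theta> \<le> 1"
  shows "let \<phi>\<theta> = (\<lambda>t x. rpow (\<phi>1 t x) \<theta> * rpow (\<phi>2 t x) (1 - \<theta>));
             B\<theta> = (\<lambda>t x. rpow (B1 t x) \<theta> * rpow (B2 t x) (1 - \<theta>));
             d\<theta> = (\<lambda>t x. \<theta> * d1 t x + (1 - \<theta>) * d2 t x)
         in (\<forall>t x. x \<ge> 0 \<longrightarrow> \<phi>\<theta> t x > 0 \<and> \<phi>\<theta> (t + T) x = \<phi>\<theta> t x) \<and>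
            (\<forall>t x. x \<ge> 0 \<longrightarrow> (\<exists>Dt Dx. has_partial_t \<phi>\<theta> t x Dt \<and> has_partial_x \<phi>\<theta> t x Dx \<and>
               - Dt - Dx + (\<theta> * \<mu>1 + (1 - \<theta>) * \<mu>2 + d\<theta> t x) * \<phi>\<theta> t x \<ge> B\<theta> t x * \<phi>\<theta> t 0))"
  unfolding Let_def
proof (intro conjI allI impI)
  fix t x :: real assume x: "x \<ge> 0"
  show "0 < rpow (\<phi>1 t x) \<theta> * rpow (\<phi>2 t x) (1 - \<theta>)"
    using \<phi>_pos[OF x, of t] by (simp add: rpow_eq_powr)
  show "rpow (\<phi>1 (t + T) x) \<theta> * rpow (\<phi>2 (t + T) x) (1 - \<theta>) = rpow (\<phi>1 t x) \<theta> * rpow (\<phi>2 t x) (1 - \<theta>)"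
    using \<phi>_per[OF x] by simp
next
  fix t x :: real assume x: "x \<ge> 0"
  obtain Dt1 Dx1 where 1: "has_partial_t \<phi>1 t x Dt1" "has_partial_x \<phi>1 t x Dx1"
     "- Dt1 - Dx1 + (d1 t x + \<mu>1) * \<phi>1 t x \<ge> B1 t x * \<phi>1 t 0" using ineq1[OF x] by blast
  obtain Dt2 Dx2 where 2: "has_partial_t \<phi>2 t x Dt2" "has_partial_x \<phi>2 t x Dx2"
     "- Dt2 - Dx2 + (d2 t x + \<mu>2) * \<phi>2 t x \<ge> B2 t x * \<phi>2 t 0" using ineq2[OF x] by blast
  let ?\<phi>\<theta> = "\<lambda>t x. rpow (\<phi>1 t x) \<theta> * rpow (\<phi>2 t x) (1 - \<theta>)"
  let ?D = "\<lambda>D1 D2. (\<theta> * D1 / \<phi>1 t x + (1 - \<theta>) * D2 / \<phi>2 t x) * ?\<phi>\<theta> t x"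
  have D_linear: "- ?D Dt1 Dt2 - ?D Dx1 Dx2 = ?D (- Dt1 - Dx1) (- Dt2 - Dx2)"
    by (simp add: diff_divide_distrib add_divide_distrib algebra_simps)
  have "has_partial_t ?\<phi>\<theta> t x (?D Dt1 Dt2)"
    using 1(1) 2(1) \<phi>_pos[OF x] unfolding has_partial_t_def
    by (intro has_real_derivative_rpow_geometric_mean[where S = UNIV]) auto
  moreover have "has_partial_x ?\<phi>\<theta> t x (?D Dx1 Dx2)"
    using 1(2) 2(2) \<phi>_pos x unfolding has_partial_x_def
    by (intro has_real_derivative_rpow_geometric_mean) auto
  moreover have "- ?D Dt1 Dt2 - ?D Dx1 Dx2 + (\<theta> * \<mu>1 + (1 - \<theta>) * \<mu>2 + (\<theta> * d1 t x + (1 - \<theta>) * d2 t x)) * ?\<phi>\<theta> t x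
      \<ge> rpow (B1 t x) \<theta> * rpow (B2 t x) (1 - \<theta>) * ?\<phi>\<theta> t 0"
    using geometric_mean_supersolution_ineq[OF \<theta> _ _ _ _ _ _ 1(3) 2(3)] \<phi>_pos[OF x] \<phi>_pos[of 0]
      nonneg[OF x] D_linear
    by (simp add: algebra_simps)
  ultimately show "\<exists>Dt Dx. has_partial_t ?\<phi>\<theta> t x Dt \<and> has_partial_x ?\<phi>\<theta> t x Dx \<and>
      rpow (B1 t x) \<theta> * rpow (B2 t x) (1 - \<theta>) * ?\<phi>\<theta> t 0
        \<le> - Dt - Dx + (\<theta> * \<mu>1 + (1 - \<theta>) * \<mu>2 + (\<theta> * d1 t x + (1 - \<theta>) * d2 t x)) * ?\<phi>\<theta> t x"
    by blast
qed

end
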